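(* Let $x_1,\dots,x_N\in\mathbb{R}^q$, let $\hat x_0\in\mathbb{R}^q$ be arbitrary, and define the median shift sequence by $$C_n=\{i: \|\hat x_n-x_i\|_1<1\},\qquad \hat x_{n+1}=\mathrm{Med}(\{x_i: i\in C_n\}),$$ where $\mathrm{Med}$ is the coordinatewise median defined in the context (and $\mathrm{Med}(\emptyset)=c$ for a fixed point $c\in\mathbb{R}^q$). Then $(\hat x_n)$ is stationary (constant from some index on), for any initialization $\hat x_0$.
   Context: $\|\cdot\|_1$ is the $L_1$ norm on $\mathbb{R}^q$. For a nonempty finite family of points of $\mathbb{R}^q$ (indexed by a subset of $\{1,\dots,N\}$), $\mathrm{Med}$ returns the point whose $k$-th coordinate is the median of the $k$-th coordinates of the family, where for an even number of values the median is taken as the average of the two middle values; thus $\mathrm{Med}$ depends only on the index set and is a minimizer of $x\mapsto\sum_i\|x-x_i\|_1$ over the family. *)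

theory Defs
  imports "HOL-Analysis.Analysis"
begin

definition l1_norm :: "real ^ 'q \<Rightarrow> real" where
  "l1_norm v = (\<Sum>k\<in>UNIV. \<bar>v $ k\<bar>)"

definition median_list :: "real list \<Rightarrow> real" where
  "median_list xs = (let ys = sort xs; n = length ys in
     if odd n then ys ! (n div 2) else (ys ! (n div 2 - 1) + ys ! (n div 2)) / 2)"

definition Med :: "real ^ 'q \<Rightarrow> (nat \<Rightarrow> real ^ 'q) \<Rightarrow> nat set \<Rightarrow> real ^ 'q" where
  "Med c x I = (if I = {} then c else
     (\<chi> k. median_list (map (\<lambda>i. x i $ k) (sorted_list_of_set I))))"

end

theory Submission
  imports Defs
begin

text \<open>The truncated cost \<open>L(v) = \<Sum>\<^sub>i min (\<parallel>v - x\<^sub>i\<parallel>\<^sub>1) 1\<close> is a Lyapunov function for the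
median shift. On the current neighbourhood \<open>C\<^sub>n\<close> the median does not increase the sum of
distances, and the points outside \<open>C\<^sub>n\<close> contribute at most 1 each, exactly as much as they
did before; so \<open>L\<close> is nonincreasing. From step 1 on, the iterates are medians of subfamilies,
so \<open>L\<close> takes finitely many values and is eventually constant. Once it is constant no point can
enter the neighbourhood (it would contribute strictly less than 1), so the neighbourhoods
decrease, hence stabilize, and then so does the sequence of their medians.\<close>

lemma eventually_const_if_decreasing_finite_range:
  fixes f :: "nat \<Rightarrow> 'a::order"
  assumes dec: "\<And>n. m0 \<le> n \<Longrightarrow> f (Suc n) \<le> f n"
    and fin: "finite (f ` {m0..})"
  shows "\<exists>m\<ge>m0. \<forall>n\<ge>m. f n = f m"
proof -
  obtain m where m: "m \<ge> m0" and minimal: "\<And>n. n \<ge> m0 \<Longrightarrow> f n \<le> f m \<Longrightarrow> f m = f n"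
    using finite_has_minimal[OF fin] by fastforce
  have "f n \<le> f m" if "m \<le> n" for n
    using that
  proof (induction n rule: dec_induct)
    case (step n)
    then show ?case using dec[of n] m by (meson order_trans le_trans)
  qed simp
  then show ?thesis using m minimal by (metis le_trans)
qed


lemma sum_abs_diff_sorted_le_at_middle:
  fixes ys :: "real list" and m y :: real
  assumes sorted: "sorted ys"
    and lower: "ys ! ((length ys - 1) div 2) \<le> m" and upper: "m \<le> ys ! (length ys div 2)"
  shows "(\<Sum>j<length ys. \<bar>m - ys ! j\<bar>) \<le> (\<Sum>j<length ys. \<bar>y - ys ! j\<bar>)"
proof -
  define n where "n = length ys"
  \<comment> \<open>Pair \<open>ys ! j\<close> with \<open>ys ! (n - 1 - j)\<close>: \<open>m\<close> lies between them, where \<open>\<bar>t - a\<bar> + \<bar>t - b\<bar>\<close> is least.\<close>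
  have pair: "\<bar>m - ys!j\<bar> + \<bar>m - ys!(n - Suc j)\<bar> \<le> \<bar>y - ys!j\<bar> + \<bar>y - ys!(n - Suc j)\<bar>"
    if j: "j < n" for j
  proof (cases "j \<le> (n - 1) div 2")
    case True
    have "ys ! j \<le> m"
      using sorted_nth_mono[OF sorted True] lower j unfolding n_def by fastforce
    moreover have "m \<le> ys ! (n - Suc j)"
      using sorted_nth_mono[OF sorted, of "n div 2" "n - Suc j"] upper j True
      unfolding n_def by fastforce
    ultimately show ?thesis by linarith
  next
    case False
    have "m \<le> ys ! j"
      using sorted_nth_mono[OF sorted, of "n div 2" j] upper j False unfolding n_def by fastforce
    moreover have "ys ! (n - Suc j) \<le> m"
      using sorted_nth_mono[OF sorted, of "n - Suc j" "(n - 1) div 2"] lower j False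
      unfolding n_def by fastforce
    ultimately show ?thesis by linarith
  qed
  have "(\<Sum>j<n. \<bar>m - ys!j\<bar> + \<bar>m - ys!(n - Suc j)\<bar>) \<le> (\<Sum>j<n. \<bar>y - ys!j\<bar> + \<bar>y - ys!(n - Suc j)\<bar>)"
    using pair by (intro sum_mono) simp
  then show ?thesis
    unfolding n_def[symmetric] sum.distrib
    by (simp only: sum.nat_diff_reindex[where g = "\<lambda>j. \<bar>m - ys!j\<bar>"]
        sum.nat_diff_reindex[where g = "\<lambda>j. \<bar>y - ys!j\<bar>"])
qed

lemma median_list_minimizes_sum_abs_diff:
  fixes xs :: "real list" and y :: real
  assumes "xs \<noteq> []"
  shows "(\<Sum>a\<leftarrow>xs. \<bar>median_list xs - a\<bar>) \<le> (\<Sum>a\<leftarrow>xs. \<bar>y - a\<bar>)"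
proof -
  define ys where "ys = sort xs"
  define n where "n = length ys"
  have sorted: "sorted ys" unfolding ys_def by simp
  have "n > 0" using assms unfolding n_def ys_def by simp
  have median: "median_list xs =
      (if odd n then ys ! (n div 2) else (ys ! (n div 2 - 1) + ys ! (n div 2)) / 2)"
    unfolding median_list_def ys_def n_def Let_def by simp
  have between: "ys ! ((n - 1) div 2) \<le> median_list xs \<and> median_list xs \<le> ys ! (n div 2)"
  proof (cases "odd n")
    case True
    then have "(n - 1) div 2 = n div 2" by (auto elim: oddE)
    then show ?thesis using median True by simp
  next
    case False
    then have "(n - 1) div 2 = n div 2 - 1" "n div 2 < n" using \<open>n > 0\<close> by auto
    moreover have "ys ! (n div 2 - 1) \<le> ys ! (n div 2)"
      using sorted_nth_mono[OF sorted, of "n div 2 - 1" "n div 2"] \<open>n div 2 < n\<close> n_def by simp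
    ultimately show ?thesis using median False by simp
  qed
  have sum_sorted: "(\<Sum>a\<leftarrow>xs. f a) = (\<Sum>j<n. f (ys ! j))" for f :: "real \<Rightarrow> real"
  proof -
    have "(\<Sum>a\<leftarrow>xs. f a) = (\<Sum>a\<leftarrow>ys. f a)"
      unfolding ys_def by (metis mset_map mset_sort sum_mset_sum_list)
    also have "\<dots> = (\<Sum>j<n. f (ys ! j))"
      unfolding n_def by (simp add: sum_list_sum_nth atLeast0LessThan)
    finally show ?thesis .
  qed
  show ?thesis
    unfolding sum_sorted
    using sum_abs_diff_sorted_le_at_middle[OF sorted] between unfolding n_def by blast
qed

lemma Med_minimizes_sum_l1_norm:
  fixes x :: "nat \<Rightarrow> real ^ 'q" and y :: "real ^ 'q"
  assumes "finite I"
  shows "(\<Sum>i\<in>I. l1_norm (Med c x I - x i)) \<le> (\<Sum>i\<in>I. l1_norm (y - x i))"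
proof (cases "I = {}")
  case False
  define L where "L = sorted_list_of_set I"
  have distinct: "distinct L" and set_L: "set L = I" and "L \<noteq> []"
    using assms False unfolding L_def by auto
  have as_list: "(\<Sum>i\<in>I. f (x i $ k)) = (\<Sum>a\<leftarrow>map (\<lambda>i. x i $ k) L. f a)" for f k
    by (simp add: o_def sum_list_distinct_conv_sum_set[OF distinct] set_L)
  have coordinate: "(\<Sum>i\<in>I. \<bar>Med c x I $ k - x i $ k\<bar>) \<le> (\<Sum>i\<in>I. \<bar>y $ k - x i $ k\<bar>)" for k
  proof -
    have "Med c x I $ k = median_list (map (\<lambda>i. x i $ k) L)"
      by (simp add: Med_def False L_def)
    then show ?thesis
      using median_list_minimizes_sum_abs_diff[of "map (\<lambda>i. x i $ k) L" "y $ k"] \<open>L \<noteq> []\<close>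
        as_list[of "\<lambda>a. \<bar>Med c x I $ k - a\<bar>" k] as_list[of "\<lambda>a. \<bar>y $ k - a\<bar>" k]
      by simp
  qed
  have l1_sum: "(\<Sum>i\<in>I. l1_norm (v - x i)) = (\<Sum>k\<in>UNIV. \<Sum>i\<in>I. \<bar>v $ k - x i $ k\<bar>)" for v
    unfolding l1_norm_def by (simp add: sum.swap[of _ I])
  show ?thesis
    unfolding l1_sum by (intro sum_mono coordinate)
qed simp


definition l1_neighbours :: "(nat \<Rightarrow> real ^ 'q) \<Rightarrow> nat set \<Rightarrow> real ^ 'q \<Rightarrow> nat set" where
  "l1_neighbours x I v = {i \<in> I. l1_norm (v - x i) < 1}"

definition truncated_l1_cost :: "(nat \<Rightarrow> real ^ 'q) \<Rightarrow> nat set \<Rightarrow> real ^ 'q \<Rightarrow> real" where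
  "truncated_l1_cost x I v = (\<Sum>i\<in>I. min (l1_norm (v - x i)) 1)"

lemma truncated_l1_cost_Med_neighbours_slack:
  fixes x :: "nat \<Rightarrow> real ^ 'q" and v c :: "real ^ 'q"
  assumes "finite I"
  defines "C \<equiv> l1_neighbours x I v"
  defines "w \<equiv> Med c x C"
  shows "truncated_l1_cost x I w + (\<Sum>i\<in>I - C. 1 - min (l1_norm (w - x i)) 1)
      \<le> truncated_l1_cost x I v"
proof -
  have C_sub: "C \<subseteq> I" and "finite C" using assms(1) unfolding C_def l1_neighbours_def by auto
  have split: "truncated_l1_cost x I u =
      (\<Sum>i\<in>C. min (l1_norm (u - x i)) 1) + (\<Sum>i\<in>I - C. min (l1_norm (u - x i)) 1)" for u
    unfolding truncated_l1_cost_def using sum.subset_diff[OF C_sub assms(1)] by (simp add: add.commute)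
  have "(\<Sum>i\<in>C. min (l1_norm (w - x i)) 1) \<le> (\<Sum>i\<in>C. l1_norm (w - x i))"
    by (intro sum_mono) simp
  also have "\<dots> \<le> (\<Sum>i\<in>C. l1_norm (v - x i))"
    unfolding w_def by (rule Med_minimizes_sum_l1_norm[OF \<open>finite C\<close>])
  also have "\<dots> = (\<Sum>i\<in>C. min (l1_norm (v - x i)) 1)"
    by (intro sum.cong) (auto simp: C_def l1_neighbours_def)
  finally have inside: "(\<Sum>i\<in>C. min (l1_norm (w - x i)) 1) \<le> (\<Sum>i\<in>C. min (l1_norm (v - x i)) 1)" .
  have outside: "(\<Sum>i\<in>I - C. min (l1_norm (v - x i)) 1) = (\<Sum>i\<in>I - C. 1)"
    by (intro sum.cong) (auto simp: C_def l1_neighbours_def)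
  show ?thesis
    using split[of w] split[of v] inside outside by (simp add: sum_subtractf)
qed

lemma truncated_l1_cost_Med_neighbours_le:
  assumes "finite I"
  shows "truncated_l1_cost x I (Med c x (l1_neighbours x I v)) \<le> truncated_l1_cost x I v"
  using truncated_l1_cost_Med_neighbours_slack[OF assms, where x = x and v = v and c = c]
    sum_nonneg[of "I - l1_neighbours x I v"
      "\<lambda>i. 1 - min (l1_norm (Med c x (l1_neighbours x I v) - x i)) 1"]
  by fastforce

lemma l1_neighbours_Med_subset_if_cost_eq:
  assumes "finite I"
    and eq: "truncated_l1_cost x I (Med c x (l1_neighbours x I v)) = truncated_l1_cost x I v"
  shows "l1_neighbours x I (Med c x (l1_neighbours x I v)) \<subseteq> l1_neighbours x I v"
proof
  define C where "C = l1_neighbours x I v"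
  define w where "w = Med c x C"
  fix i assume new: "i \<in> l1_neighbours x I w"
  show "i \<in> C"
  proof (rule ccontr)
    assume "i \<notin> C"
    with new have "i \<in> I - C" and "l1_norm (w - x i) < 1" by (auto simp: l1_neighbours_def)
    then have "0 < (\<Sum>i\<in>I - C. 1 - min (l1_norm (w - x i)) 1)"
      using member_le_sum[of i "I - C" "\<lambda>i. 1 - min (l1_norm (w - x i)) 1"] \<open>finite I\<close>
      by fastforce
    then show False
      using truncated_l1_cost_Med_neighbours_slack[OF \<open>finite I\<close>, where x = x and v = v and c = c] eq
      unfolding C_def w_def by linarith
  qed
qed

theorem proposition4:
  fixes N :: nat and x :: "nat \<Rightarrow> real ^ 'q" and c :: "real ^ 'q"
    and xhat :: "nat \<Rightarrow> real ^ 'q"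
  assumes step: "\<And>n. xhat (Suc n) =
      Med c x {i \<in> {1..N}. l1_norm (xhat n - x i) < 1}"
  shows "\<exists>m. \<forall>n\<ge>m. xhat n = xhat m"
proof -
  define C where "C n = l1_neighbours x {1..N} (xhat n)" for n
  define L where "L n = truncated_l1_cost x {1..N} (xhat n)" for n
  have xhat_Suc: "xhat (Suc n) = Med c x (C n)" for n
    using step unfolding C_def l1_neighbours_def .
  have L_dec: "L (Suc n) \<le> L n" for n
    unfolding L_def xhat_Suc C_def by (rule truncated_l1_cost_Med_neighbours_le) simp
  have "xhat ` {1..} \<subseteq> Med c x ` Pow {1..N}"
  proof (rule image_subsetI)
    fix n :: nat assume "n \<in> {1..}"
    then obtain k where "n = Suc k" by (cases n) auto
    then show "xhat n \<in> Med c x ` Pow {1..N}"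
      by (auto simp: xhat_Suc C_def l1_neighbours_def)
  qed
  then have "finite (xhat ` {1..})"
    by (rule finite_subset) simp
  then have "finite (truncated_l1_cost x {1..N} ` xhat ` {1..})"
    by (rule finite_imageI)
  then have "finite (L ` {1..})"
    by (simp add: L_def[abs_def] image_image)
  then obtain m where L_const: "\<And>n. n \<ge> m \<Longrightarrow> L n = L m"
    using eventually_const_if_decreasing_finite_range[of 1 L] L_dec by blast
  have C_dec: "C (Suc n) \<subseteq> C n" if "n \<ge> m" for n
    using l1_neighbours_Med_subset_if_cost_eq[of "{1..N}" x c "xhat n"]
      L_const[of n] L_const[of "Suc n"] that
    unfolding L_def C_def xhat_Suc by simp
  have "finite (C ` {m..})"
    by (rule finite_subset[of _ "Pow {1..N}"]) (auto simp: C_def l1_neighbours_def)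
  then obtain m' where "\<And>n. n \<ge> m' \<Longrightarrow> C n = C m'"
    using eventually_const_if_decreasing_finite_range[of m C] C_dec by blast
  then have "\<forall>n\<ge>Suc m'. xhat n = xhat (Suc m')"
    by (metis Suc_le_D Suc_le_mono xhat_Suc)
  then show ?thesis by blast
qed

end
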